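(* Let $\Gamma_H$ be the H-junction tree with edges $e_1,\dots,e_5$ of propagation times $t_1,\dots,t_5$, linearly independent over $\mathbb{Q}$, where the two interior vertices are $A$ (incident to $e_1,e_2,e_3$) and $B$ (incident to $e_3,e_4,e_5$). Then for all $T\ge 0$ $$N(\Gamma_H,A,B,T) = \#[2n_1t_1 + 2n_2t_2 + 2n_3t_3 + 2n_4t_4 \le T - t_3] + \#[2n_1t_1 + 2n_2t_2 + 2n_3t_3 + 2n_5t_5 \le T - t_3] + \#[2n_1t_1 + 2n_2t_2 + 2n_4t_4 + 2n_5t_5 \le T - t_3] - \#[2n_1t_1 + 2n_2t_2 \le T - t_3].$$
   Context: $\Gamma_H$ has six vertices: $A$, $B$, and the four distinct valence-one endpoints of $e_1,e_2,e_4,e_5$ other than $A$, $B$; $e_3$ joins $A$ and $B$. Dynamics: each edge $e_i$ is traversed in time $t_i$; at time $0$ the process starts at $A$ (a point departs from $A$ along each incident edge); at a valence-one vertex a point is reflected; if $k$ points arrive simultaneously at an interior vertex of valence $v$, then $v$ points leave it, one along each incident edge, and $v-k$ new points are said to be born there. $N(\Gamma,A,X,T)$ is the total number of new points born at vertex $X$ up to the moment $T$ when the process starts at $A$. $\#[\text{inequality}]$ denotes the number of tuples of nonnegative integers $n_i$ satisfying the inequality (it is $0$ if the right-hand side is negative). *)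

theory Defs
  imports Main Complex_Main
begin

text \<open>A metric graph: a set of edges E, each edge e joining the two vertices of
  endpts e, traversed in time len e.\<close>

definition incident :: "('e \<Rightarrow> 'v \<times> 'v) \<Rightarrow> 'e \<Rightarrow> 'v \<Rightarrow> 'v \<Rightarrow> bool" where
  "incident endpts e u w \<longleftrightarrow> endpts e = (u, w) \<or> endpts e = (w, u)"

text \<open>Events: (w, s) means that at time s points leave vertex w, one along each
  incident edge (either the start at the source X0 at time 0, or some point arrives at w
  at time s; at a valence-one vertex this is the reflection).\<close>

inductive_set events ::
  "'e set \<Rightarrow> ('e \<Rightarrow> 'v \<times> 'v) \<Rightarrow> ('e \<Rightarrow> real) \<Rightarrow> 'v \<Rightarrow> ('v \<times> real) set"
  for E endpts len X0 where
  start: "(X0, 0) \<in> events E endpts len X0"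
| step: "(u, s) \<in> events E endpts len X0 \<Longrightarrow> e \<in> E \<Longrightarrow> incident endpts e u w
         \<Longrightarrow> (w, s + len e) \<in> events E endpts len X0"

definition valence :: "'e set \<Rightarrow> ('e \<Rightarrow> 'v \<times> 'v) \<Rightarrow> 'v \<Rightarrow> nat" where
  "valence E endpts w = card {e \<in> E. \<exists>u. incident endpts e u w}"

definition arrivals ::
  "'e set \<Rightarrow> ('e \<Rightarrow> 'v \<times> 'v) \<Rightarrow> ('e \<Rightarrow> real) \<Rightarrow> 'v \<Rightarrow> 'v \<Rightarrow> real \<Rightarrow> nat" where
  "arrivals E endpts len X0 w \<tau> =
     card {e \<in> E. \<exists>u. incident endpts e u w \<and> (u, \<tau> - len e) \<in> events E endpts len X0}"

definition born ::
  "'e set \<Rightarrow> ('e \<Rightarrow> 'v \<times> 'v) \<Rightarrow> ('e \<Rightarrow> real) \<Rightarrow> 'v \<Rightarrow> 'v \<Rightarrow> real \<Rightarrow> nat" where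
  "born E endpts len X0 w \<tau> = valence E endpts w - arrivals E endpts len X0 w \<tau>"

text \<open>N(Gamma, X0, X, T): total number of new points born at X up to time T
  (inclusive) when the process starts at X0.\<close>
definition Nborn ::
  "'e set \<Rightarrow> ('e \<Rightarrow> 'v \<times> 'v) \<Rightarrow> ('e \<Rightarrow> real) \<Rightarrow> 'v \<Rightarrow> 'v \<Rightarrow> real \<Rightarrow> nat" where
  "Nborn E endpts len X0 X T =
     (\<Sum>\<tau> \<in> {\<tau>. (X, \<tau>) \<in> events E endpts len X0 \<and> \<tau> \<le> T}. born E endpts len X0 X \<tau>)"

datatype HV = HA | HB | HL1 | HL2 | HL4 | HL5

definition H_edges :: "nat set" where "H_edges = {1, 2, 3, 4, 5}"

definition H_endpts :: "nat \<Rightarrow> HV \<times> HV" where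
  "H_endpts e = (if e = 1 then (HA, HL1) else if e = 2 then (HA, HL2)
                 else if e = 3 then (HA, HB) else if e = 4 then (HB, HL4) else (HB, HL5))"

definition lattice_count :: "real list \<Rightarrow> real \<Rightarrow> nat" where
  "lattice_count cs R = card {ns :: nat list. length ns = length cs \<and>
      (\<Sum>i<length cs. 2 * real (ns ! i) * cs ! i) \<le> R}"

end

theory Submission
  imports Defs
begin

text \<open>A point reaching B at time \<tau> has run along a walk from A to B, and \<tau> = \<Sum> c_i t_i,
  where c_i counts the traversals of e_i. By rational independence the counts are determined
  by \<tau>; parity forces c_3 odd and all other c_i even, so the events at B are the times
  t_3 + \<Sum> 2 n_i t_i with n_1, ..., n_5 \<ge> 0, each occurring once. At such a time a point
  arrives along e_4 iff n_4 > 0, along e_5 iff n_5 > 0, and along e_3 iff some point is at A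
  at time \<tau> - t_3, i.e. iff n_3 > 0 or n_4 = n_5 = 0 (e_4, e_5 cannot be used without
  crossing e_3 twice). Hence 3 - #arrivals = [n_5 = 0] + [n_4 = 0] + [n_3 = 0] - [n_3 = n_4 = n_5 = 0],
  and summing each indicator over the lattice points counts the lattice points of a face.\<close>

text \<open>Tuples (n_i)_{i \<in> I} are encoded as functions vanishing off I, so that the tuples of a
  sub-list of weights are restrictions of the tuples of the full list.\<close>

definition lattice_points :: "nat set \<Rightarrow> (nat \<Rightarrow> real) \<Rightarrow> real \<Rightarrow> (nat \<Rightarrow> nat) set" where
  "lattice_points I t R =
     {n. (\<forall>i. i \<notin> I \<longrightarrow> n i = 0) \<and> (\<Sum>i\<in>I. 2 * real (n i) * t i) \<le> R}"

lemma lattice_count_map_eq_card_lattice_points: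
  assumes "distinct is"
  shows "lattice_count (map t is) R = card (lattice_points (set is) t R)"
proof -
  have weighted_sum: "(\<Sum>j<length is. 2 * real (n (is ! j)) * t (is ! j))
      = (\<Sum>i\<in>set is. 2 * real (n i) * t i)" for n
    using sum.reindex_bij_betw[OF bij_betw_nth[OF assms refl refl], of "\<lambda>i. 2 * real (n i) * t i"]
    by simp
  have "bij_betw (\<lambda>n. map n is) (lattice_points (set is) t R)
      {ns. length ns = length (map t is) \<and>
           (\<Sum>j<length (map t is). 2 * real (ns ! j) * map t is ! j) \<le> R}"
  proof (rule bij_betwI')
    fix n n' assume "n \<in> lattice_points (set is) t R" "n' \<in> lattice_points (set is) t R"
    then show "(map n is = map n' is) = (n = n')"
      by (auto simp: lattice_points_def fun_eq_iff)
  next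
    fix n assume "n \<in> lattice_points (set is) t R"
    then show "map n is \<in> {ns. length ns = length (map t is) \<and>
           (\<Sum>j<length (map t is). 2 * real (ns ! j) * map t is ! j) \<le> R}"
      by (simp add: lattice_points_def weighted_sum)
  next
    fix ns assume ns: "ns \<in> {ns. length ns = length (map t is) \<and>
           (\<Sum>j<length (map t is). 2 * real (ns ! j) * map t is ! j) \<le> R}"
    define n where "n i = (case map_of (zip is ns) i of None \<Rightarrow> 0 | Some x \<Rightarrow> x)" for i
    have "map n is = ns"
      using ns assms by (intro nth_equalityI) (auto simp: n_def map_of_zip_nth)
    have "(\<Sum>i\<in>set is. 2 * real (n i) * t i) = (\<Sum>j<length is. 2 * real (ns ! j) * t (is ! j))"
      unfolding weighted_sum[symmetric] using \<open>map n is = ns\<close> by (auto intro!: sum.cong)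
    moreover have "n i = 0" if "i \<notin> set is" for i
    proof -
      have "map_of (zip is ns) i = None"
        using ns that by simp
      then show ?thesis by (simp add: n_def)
    qed
    ultimately have "n \<in> lattice_points (set is) t R"
      using ns by (auto simp: lattice_points_def)
    with \<open>map n is = ns\<close> show "\<exists>n\<in>lattice_points (set is) t R. ns = map n is"
      by metis
  qed
  then show ?thesis
    unfolding lattice_count_def by (rule bij_betw_same_card[symmetric])
qed

lemma lattice_points_restrict:
  assumes "finite I" "J \<subseteq> I"
  shows "lattice_points J t R = lattice_points I t R \<inter> {n. \<forall>i\<in>I - J. n i = 0}"
proof -
  have "(\<Sum>i\<in>J. 2 * real (n i) * t i) = (\<Sum>i\<in>I. 2 * real (n i) * t i)"
    if "\<forall>i\<in>I - J. n i = 0" for n :: "nat \<Rightarrow> nat"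
    using assms that by (intro sum.mono_neutral_left) auto
  then show ?thesis
    using assms(2) by (auto simp: lattice_points_def)
qed

lemma finite_lattice_points:
  assumes "finite I" and pos: "\<forall>i\<in>I. t i > 0"
  shows "finite (lattice_points I t R)"
proof -
  let ?B = "\<Union>i\<in>I. {..nat \<lceil>R / t i\<rceil>}"
  have bounded: "n i \<in> ?B" if n: "n \<in> lattice_points I t R" and i: "i \<in> I" for n i
  proof -
    have "2 * real (n i) * t i \<le> (\<Sum>j\<in>I. 2 * real (n j) * t j)"
      using assms i by (intro member_le_sum) auto
    also have "\<dots> \<le> R"
      using n by (simp add: lattice_points_def)
    finally have "2 * real (n i) * t i \<le> R" .
    moreover have "0 \<le> real (n i) * t i"
      using pos i by (simp add: less_imp_le)
    ultimately have "real (n i) * t i \<le> R"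
      by linarith
    then have "real (n i) \<le> R / t i"
      using pos i by (simp add: pos_le_divide_eq)
    also have "\<dots> \<le> real (nat \<lceil>R / t i\<rceil>)"
      by (rule real_nat_ceiling_ge)
    finally have "n i \<le> nat \<lceil>R / t i\<rceil>"
      by (simp only: of_nat_le_iff)
    with i show ?thesis
      by (simp only: UN_iff atMost_iff) blast
  qed
  have "lattice_points I t R \<subseteq> {n. \<forall>i. (i \<in> I \<longrightarrow> n i \<in> ?B) \<and> (i \<notin> I \<longrightarrow> n i = 0)}"
  proof
    fix n assume n: "n \<in> lattice_points I t R"
    then have "\<forall>i. i \<notin> I \<longrightarrow> n i = 0"
      by (simp add: lattice_points_def)
    with bounded[OF n] show "n \<in> {n. \<forall>i. (i \<in> I \<longrightarrow> n i \<in> ?B) \<and> (i \<notin> I \<longrightarrow> n i = 0)}"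
      by blast
  qed
  moreover have "finite {n. \<forall>i. (i \<in> I \<longrightarrow> n i \<in> ?B) \<and> (i \<notin> I \<longrightarrow> n i = 0)}"
    using \<open>finite I\<close> by (intro finite_set_of_finite_funs) simp_all
  ultimately show ?thesis
    by (rule finite_subset)
qed

lemma lattice_count_eq_card_vanishing:
  assumes "finite I" "distinct is" "set is \<subseteq> I"
  shows "lattice_count (map t is) R = card (lattice_points I t R \<inter> {n. \<forall>i\<in>I - set is. n i = 0})"
  unfolding lattice_count_map_eq_card_lattice_points[OF assms(2)] lattice_points_restrict[OF assms(1,3)] ..

definition rat_independent :: "'a set \<Rightarrow> ('a \<Rightarrow> real) \<Rightarrow> bool" where
  "rat_independent I t \<longleftrightarrow>
     (\<forall>q :: 'a \<Rightarrow> rat. (\<Sum>i\<in>I. real_of_rat (q i) * t i) = 0 \<longrightarrow> (\<forall>i\<in>I. q i = 0))"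

lemma rat_independent_nat_coeffs_eq:
  fixes c c' :: "'a \<Rightarrow> nat"
  assumes indep: "rat_independent I t"
    and eq: "(\<Sum>i\<in>I. real (c i) * t i) = (\<Sum>i\<in>I. real (c' i) * t i)"
  shows "\<forall>i\<in>I. c i = c' i"
proof -
  define q :: "'a \<Rightarrow> rat" where "q i = of_nat (c i) - of_nat (c' i)" for i
  have "(\<Sum>i\<in>I. real_of_rat (q i) * t i) = (\<Sum>i\<in>I. real (c i) * t i) - (\<Sum>i\<in>I. real (c' i) * t i)"
    by (simp add: q_def of_rat_diff left_diff_distrib sum_subtractf)
  with eq indep have "\<forall>i\<in>I. q i = 0"
    by (simp add: rat_independent_def)
  then show ?thesis
    by (simp add: q_def)
qed

lemma incident_sym: "incident endpts e u w \<Longrightarrow> incident endpts e w u"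
  by (auto simp: incident_def)

lemma events_bounces:
  assumes "(u, s) \<in> events E endpts len X0" "e \<in> E" "incident endpts e u w"
  shows "(u, s + 2 * real m * len e) \<in> events E endpts len X0"
proof (induction m)
  case 0
  with assms(1) show ?case by simp
next
  case (Suc m)
  then have "(w, s + 2 * real m * len e + len e) \<in> events E endpts len X0"
    using assms(2,3) by (rule events.step)
  then have "(u, s + 2 * real m * len e + len e + len e) \<in> events E endpts len X0"
    using assms(2) incident_sym[OF assms(3)] by (rule events.step)
  then show ?case
    by (simp add: algebra_simps)
qed

lemma finite_H_edges: "finite H_edges"
  by (simp add: H_edges_def)

abbreviation H_events :: "(nat \<Rightarrow> real) \<Rightarrow> (HV \<times> real) set" where
  "H_events t \<equiv> events H_edges H_endpts t HA"

definition walk_time :: "(nat \<Rightarrow> real) \<Rightarrow> (nat \<Rightarrow> nat) \<Rightarrow> real" where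
  "walk_time t c = (\<Sum>i\<in>H_edges. real (c i) * t i)"

text \<open>path_edges v are the edges of the path from A to v. The traversal counts of a walk from A
  to v are odd exactly on these edges, and e_4, e_5 cannot be traversed without crossing e_3.\<close>

definition path_edges :: "HV \<Rightarrow> nat set" where
  "path_edges v = (case v of HA \<Rightarrow> {} | HL1 \<Rightarrow> {1} | HL2 \<Rightarrow> {2}
                            | HB \<Rightarrow> {3} | HL4 \<Rightarrow> {3, 4} | HL5 \<Rightarrow> {3, 5})"

definition admissible_counts :: "HV \<Rightarrow> (nat \<Rightarrow> nat) \<Rightarrow> bool" where
  "admissible_counts v c \<longleftrightarrow>
     (\<forall>i\<in>H_edges. odd (c i) \<longleftrightarrow> i \<in> path_edges v) \<and> (c 3 = 0 \<longrightarrow> c 4 = 0 \<and> c 5 = 0)"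

lemma path_edges_incident:
  "e \<in> H_edges \<Longrightarrow> incident H_endpts e u w \<Longrightarrow> i \<in> path_edges w \<longleftrightarrow> (i \<in> path_edges u \<longleftrightarrow> i \<noteq> e)"
  by (auto simp: H_edges_def incident_def H_endpts_def path_edges_def split: if_splits)

lemma path_edges_3_if_incident_outer:
  "e \<in> {4, 5} \<Longrightarrow> incident H_endpts e u w \<Longrightarrow> 3 \<in> path_edges u"
  by (auto simp: incident_def H_endpts_def path_edges_def)

lemma walk_time_fun_upd_Suc:
  assumes "e \<in> H_edges"
  shows "walk_time t (c(e := Suc (c e))) = walk_time t c + t e"
proof -
  have "walk_time t (c(e := Suc (c e))) = (\<Sum>i\<in>H_edges. real (c i) * t i + (if i = e then t i else 0))"
    unfolding walk_time_def by (rule sum.cong) (auto simp: algebra_simps)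
  also have "\<dots> = walk_time t c + t e"
    using assms by (simp add: walk_time_def sum.distrib sum.delta finite_H_edges)
  finally show ?thesis .
qed

lemma H_events_admissible_counts:
  "(v, s) \<in> H_events t \<Longrightarrow> \<exists>c. s = walk_time t c \<and> admissible_counts v c"
proof (induction rule: events.induct)
  case start
  show ?case
    by (intro exI[of _ "\<lambda>_. 0"]) (simp add: walk_time_def admissible_counts_def path_edges_def)
next
  case (step u s e w)
  then obtain c where s: "s = walk_time t c" and c: "admissible_counts u c"
    by blast
  let ?c' = "c(e := Suc (c e))"
  have "3 \<in> path_edges u" if "e \<in> {4, 5}"
    using that step.hyps(3) by (rule path_edges_3_if_incident_outer)
  then have "c 3 \<noteq> 0" if "e \<in> {4, 5}"
    using that c by (auto simp: admissible_counts_def H_edges_def)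
  with c path_edges_incident[OF step.hyps(2,3)] have "admissible_counts w ?c'"
    by (auto simp: admissible_counts_def)
  moreover have "s + t e = walk_time t ?c'"
    using s step.hyps(2) by (simp add: walk_time_fun_upd_Suc)
  ultimately show ?case
    by blast
qed

lemma walk_time_inj:
  assumes "rat_independent H_edges t"
    and "walk_time t c = walk_time t c'"
  shows "\<forall>i\<in>H_edges. c i = c' i"
  using assms unfolding walk_time_def by (rule rat_independent_nat_coeffs_eq)

lemma H_arrival_counts:
  assumes indep: "rat_independent H_edges t"
    and e: "e \<in> H_edges" and arrival: "(u, walk_time t c - t e) \<in> H_events t"
  obtains c' where "admissible_counts u c'" "\<forall>i\<in>H_edges. c i = c' i + of_bool (i = e)"
proof -
  obtain c' where c': "walk_time t c - t e = walk_time t c'" "admissible_counts u c'"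
    using H_events_admissible_counts[OF arrival] by blast
  then have "walk_time t c = walk_time t (c'(e := Suc (c' e)))"
    using e by (simp add: walk_time_fun_upd_Suc)
  then have "\<forall>i\<in>H_edges. c i = (c'(e := Suc (c' e))) i"
    by (rule walk_time_inj[OF indep])
  then have "\<forall>i\<in>H_edges. c i = c' i + of_bool (i = e)"
    by simp
  with c'(2) show thesis
    by (rule that)
qed

text \<open>The counts of the walk from A to B that crosses e_3 once and bounces n_i times along each e_i.\<close>

definition HB_counts :: "(nat \<Rightarrow> nat) \<Rightarrow> nat \<Rightarrow> nat" where
  "HB_counts n i = 2 * n i + of_bool (i = 3)"

lemma walk_time_HB_counts:
  "walk_time t (HB_counts n) = t 3 + (\<Sum>i\<in>H_edges. 2 * real (n i) * t i)"
  by (simp add: walk_time_def HB_counts_def H_edges_def algebra_simps)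

lemma H_events_HA:
  "(HA, 2 * real a * t 1 + 2 * real b * t 2 + 2 * real k * t 3) \<in> H_events t"
proof -
  have "(HA, 0 + 2 * real a * t 1) \<in> H_events t"
    by (rule events_bounces[OF events.start, where e=1 and w=HL1])
      (simp_all add: H_edges_def incident_def H_endpts_def)
  then have "(HA, 0 + 2 * real a * t 1 + 2 * real b * t 2) \<in> H_events t"
    by (rule events_bounces[where e=2 and w=HL2])
      (simp_all add: H_edges_def incident_def H_endpts_def)
  then have "(HA, 0 + 2 * real a * t 1 + 2 * real b * t 2 + 2 * real k * t 3) \<in> H_events t"
    by (rule events_bounces[where e=3 and w=HB])
      (simp_all add: H_edges_def incident_def H_endpts_def)
  then show ?thesis
    by simp
qed

lemma H_events_HB: "(HB, walk_time t (HB_counts n)) \<in> H_events t"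
proof -
  let ?s = "2 * real (n 1) * t 1 + 2 * real (n 2) * t 2 + 2 * real (n 3) * t 3"
  have "(HB, ?s + t 3) \<in> H_events t"
    by (rule events.step[OF H_events_HA])
      (simp_all add: H_edges_def incident_def H_endpts_def)
  then have "(HB, ?s + t 3 + 2 * real (n 4) * t 4) \<in> H_events t"
    by (rule events_bounces[where e=4 and w=HL4])
      (simp_all add: H_edges_def incident_def H_endpts_def)
  then have "(HB, ?s + t 3 + 2 * real (n 4) * t 4 + 2 * real (n 5) * t 5) \<in> H_events t"
    by (rule events_bounces[where e=5 and w=HL5])
      (simp_all add: H_edges_def incident_def H_endpts_def)
  then show ?thesis
    by (simp add: walk_time_HB_counts H_edges_def algebra_simps)
qed

lemma valence_HB: "valence H_edges H_endpts HB = 3"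
proof -
  have "{e \<in> H_edges. \<exists>u. incident H_endpts e u HB} = {3, 4, 5}"
    by (auto simp: H_edges_def incident_def H_endpts_def)
  then show ?thesis
    by (simp add: valence_def)
qed

lemma arrivals_HB:
  "arrivals H_edges H_endpts t HA HB \<tau> =
     of_bool ((HA, \<tau> - t 3) \<in> H_events t) + of_bool ((HL4, \<tau> - t 4) \<in> H_events t)
     + of_bool ((HL5, \<tau> - t 5) \<in> H_events t)"
proof -
  have arriving: "{e \<in> H_edges. \<exists>u. incident H_endpts e u HB \<and> (u, \<tau> - t e) \<in> H_events t}
      = (if (HA, \<tau> - t 3) \<in> H_events t then {3} else {})
        \<union> (if (HL4, \<tau> - t 4) \<in> H_events t then {4} else {})
        \<union> (if (HL5, \<tau> - t 5) \<in> H_events t then {5} else {})"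
    by (auto simp: H_edges_def incident_def H_endpts_def)
  show ?thesis
    unfolding arrivals_def arriving
    by (cases "(HA, \<tau> - t 3) \<in> H_events t"; cases "(HL4, \<tau> - t 4) \<in> H_events t";
        cases "(HL5, \<tau> - t 5) \<in> H_events t") simp_all
qed

lemma arrival_HB_from_HA:
  assumes indep: "rat_independent H_edges t"
  shows "(HA, walk_time t (HB_counts n) - t 3) \<in> H_events t \<longleftrightarrow> n 3 \<noteq> 0 \<or> n 4 = 0 \<and> n 5 = 0"
proof
  assume arrival: "(HA, walk_time t (HB_counts n) - t 3) \<in> H_events t"
  have "3 \<in> H_edges"
    by (simp add: H_edges_def)
  then obtain c' where "admissible_counts HA c'" "\<forall>i\<in>H_edges. HB_counts n i = c' i + of_bool (i = 3)"
    using arrival by (rule H_arrival_counts[OF indep])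
  then show "n 3 \<noteq> 0 \<or> n 4 = 0 \<and> n 5 = 0"
    by (auto simp: admissible_counts_def HB_counts_def H_edges_def)
next
  assume "n 3 \<noteq> 0 \<or> n 4 = 0 \<and> n 5 = 0"
  then consider m where "n 3 = Suc m" | "n 4 = 0" "n 5 = 0"
    by (cases "n 3") auto
  then show "(HA, walk_time t (HB_counts n) - t 3) \<in> H_events t"
  proof cases
    case 1
    have "(HA, walk_time t (HB_counts (n(3 := m))) + t 3) \<in> H_events t"
      by (rule events.step[OF H_events_HB])
        (simp_all add: H_edges_def incident_def H_endpts_def)
    moreover have "walk_time t (HB_counts (n(3 := m))) + t 3 = walk_time t (HB_counts n) - t 3"
      using 1 by (simp add: walk_time_HB_counts H_edges_def algebra_simps)
    ultimately show ?thesis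
      by simp
  next
    case 2
    then have "2 * real (n 1) * t 1 + 2 * real (n 2) * t 2 + 2 * real (n 3) * t 3
        = walk_time t (HB_counts n) - t 3"
      by (simp add: walk_time_HB_counts H_edges_def)
    with H_events_HA[of "n 1" t "n 2" "n 3"] show ?thesis
      by simp
  qed
qed

lemma arrival_HB_from_leaf:
  assumes indep: "rat_independent H_edges t"
    and leaf: "(e, L) \<in> {(4, HL4), (5, HL5)}"
  shows "(L, walk_time t (HB_counts n) - t e) \<in> H_events t \<longleftrightarrow> n e \<noteq> 0"
proof
  have e: "e \<in> H_edges" "e \<noteq> 3"
    using leaf by (auto simp: H_edges_def)
  assume "(L, walk_time t (HB_counts n) - t e) \<in> H_events t"
  then obtain c' where "\<forall>i\<in>H_edges. HB_counts n i = c' i + of_bool (i = e)"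
    by (rule H_arrival_counts[OF indep e(1)])
  then have "2 * n e = Suc (c' e)"
    using e by (auto simp: HB_counts_def)
  then show "n e \<noteq> 0"
    by presburger
next
  assume "n e \<noteq> 0"
  then obtain m where m: "n e = Suc m"
    by (cases "n e") auto
  have "(L, walk_time t (HB_counts (n(e := m))) + t e) \<in> H_events t"
    using leaf by (intro events.step[OF H_events_HB]) (auto simp: H_edges_def incident_def H_endpts_def)
  moreover have "walk_time t (HB_counts (n(e := m))) + t e = walk_time t (HB_counts n) - t e"
    using leaf m by (auto simp: walk_time_HB_counts H_edges_def algebra_simps)
  ultimately show "(L, walk_time t (HB_counts n) - t e) \<in> H_events t"
    by simp
qed

lemma born_HB:
  assumes indep: "rat_independent H_edges t"
  shows "int (born H_edges H_endpts t HA HB (walk_time t (HB_counts n)))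
       = of_bool (n 5 = 0) + of_bool (n 4 = 0) + of_bool (n 3 = 0) - of_bool (n 3 = 0 \<and> n 4 = 0 \<and> n 5 = 0)"
  using arrival_HB_from_HA[OF indep] arrival_HB_from_leaf[OF indep, of 4 HL4]
    arrival_HB_from_leaf[OF indep, of 5 HL5]
  by (simp add: born_def valence_HB arrivals_HB)

lemma HB_event_times:
  "{\<tau>. (HB, \<tau>) \<in> H_events t \<and> \<tau> \<le> T}
     = (\<lambda>n. walk_time t (HB_counts n)) ` lattice_points H_edges t (T - t 3)"
proof (intro equalityI subsetI)
  fix \<tau> assume "\<tau> \<in> {\<tau>. (HB, \<tau>) \<in> H_events t \<and> \<tau> \<le> T}"
  then have event: "(HB, \<tau>) \<in> H_events t" and le: "\<tau> \<le> T"
    by auto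
  obtain c where \<tau>: "\<tau> = walk_time t c" and c: "admissible_counts HB c"
    using H_events_admissible_counts[OF event] by blast
  define n where "n i = (if i \<in> H_edges then c i div 2 else 0)" for i
  have parity: "odd (c i) \<longleftrightarrow> i = 3" if "i \<in> H_edges" for i
    using c that by (simp add: admissible_counts_def path_edges_def)
  have "c i = HB_counts n i" if "i \<in> H_edges" for i
    using parity[OF that] that
    by (cases "i = 3") (simp_all add: HB_counts_def n_def even_two_times_div_two)
  then have \<tau>_eq: "\<tau> = walk_time t (HB_counts n)"
    unfolding \<tau> walk_time_def by (intro sum.cong) simp_all
  have "(\<Sum>i\<in>H_edges. 2 * real (n i) * t i) \<le> T - t 3"
    using le unfolding \<tau>_eq walk_time_HB_counts by simp
  then have "n \<in> lattice_points H_edges t (T - t 3)"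
    by (simp add: lattice_points_def n_def)
  with \<tau>_eq show "\<tau> \<in> (\<lambda>n. walk_time t (HB_counts n)) ` lattice_points H_edges t (T - t 3)"
    by blast
next
  fix \<tau> assume "\<tau> \<in> (\<lambda>n. walk_time t (HB_counts n)) ` lattice_points H_edges t (T - t 3)"
  then obtain n where "n \<in> lattice_points H_edges t (T - t 3)" "\<tau> = walk_time t (HB_counts n)"
    by blast
  then show "\<tau> \<in> {\<tau>. (HB, \<tau>) \<in> H_events t \<and> \<tau> \<le> T}"
    using H_events_HB by (simp add: lattice_points_def walk_time_HB_counts)
qed

lemma inj_on_HB_event_times:
  assumes indep: "rat_independent H_edges t"
  shows "inj_on (\<lambda>n. walk_time t (HB_counts n)) (lattice_points H_edges t R)"
proof (rule inj_onI)
  fix n n' assume n: "n \<in> lattice_points H_edges t R" and n': "n' \<in> lattice_points H_edges t R"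
    and eq: "walk_time t (HB_counts n) = walk_time t (HB_counts n')"
  have "\<forall>i\<in>H_edges. HB_counts n i = HB_counts n' i"
    by (rule walk_time_inj[OF indep eq])
  then have "\<forall>i\<in>H_edges. n i = n' i"
    by (simp add: HB_counts_def)
  with n n' show "n = n'"
    by (auto simp: lattice_points_def fun_eq_iff)
qed

lemma Nborn_HB_eq_sum:
  assumes indep: "rat_independent H_edges t"
  shows "int (Nborn H_edges H_endpts t HA HB T)
       = (\<Sum>n\<in>lattice_points H_edges t (T - t 3). of_bool (n 5 = 0) + of_bool (n 4 = 0)
            + of_bool (n 3 = 0) - of_bool (n 3 = 0 \<and> n 4 = 0 \<and> n 5 = 0))"
proof -
  have "int (Nborn H_edges H_endpts t HA HB T)
      = (\<Sum>n\<in>lattice_points H_edges t (T - t 3).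
           int (born H_edges H_endpts t HA HB (walk_time t (HB_counts n))))"
    unfolding Nborn_def HB_event_times sum.reindex[OF inj_on_HB_event_times[OF indep]]
    by (simp add: of_nat_sum)
  also have "\<dots> = (\<Sum>n\<in>lattice_points H_edges t (T - t 3). of_bool (n 5 = 0) + of_bool (n 4 = 0)
            + of_bool (n 3 = 0) - of_bool (n 3 = 0 \<and> n 4 = 0 \<and> n 5 = 0))"
    by (rule sum.cong[OF refl born_HB[OF indep]])
  finally show ?thesis .
qed

theorem mainTheorem4:
  fixes t :: "nat \<Rightarrow> real" and T :: real
  assumes pos: "\<forall>i\<in>{1..5}. t i > 0"
    and linindep: "\<forall>q :: nat \<Rightarrow> rat.
        (\<Sum>i\<in>{1..5}. real_of_rat (q i) * t i) = 0 \<longrightarrow> (\<forall>i\<in>{1..5}. q i = 0)"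
    and T: "T \<ge> 0"
  shows "int (Nborn H_edges H_endpts t HA HB T) =
           int (lattice_count [t 1, t 2, t 3, t 4] (T - t 3))
         + int (lattice_count [t 1, t 2, t 3, t 5] (T - t 3))
         + int (lattice_count [t 1, t 2, t 4, t 5] (T - t 3))
         - int (lattice_count [t 1, t 2] (T - t 3))"
proof -
  have edges: "H_edges = {1..5}"
    by (auto simp: H_edges_def)
  have indep: "rat_independent H_edges t"
    using linindep by (simp add: rat_independent_def edges)
  define P where "P = lattice_points H_edges t (T - t 3)"
  have "finite P"
    unfolding P_def using finite_H_edges pos[folded edges] by (rule finite_lattice_points)
  have counts:
    "lattice_count [t 1, t 2, t 3, t 4] (T - t 3) = card (P \<inter> {n. n 5 = 0})"
    "lattice_count [t 1, t 2, t 3, t 5] (T - t 3) = card (P \<inter> {n. n 4 = 0})"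
    "lattice_count [t 1, t 2, t 4, t 5] (T - t 3) = card (P \<inter> {n. n 3 = 0})"
    "lattice_count [t 1, t 2] (T - t 3) = card (P \<inter> {n. n 3 = 0 \<and> n 4 = 0 \<and> n 5 = 0})"
    unfolding P_def
    using lattice_count_eq_card_vanishing[OF finite_H_edges, of "[1, 2, 3, 4]" t "T - t 3"]
      lattice_count_eq_card_vanishing[OF finite_H_edges, of "[1, 2, 3, 5]" t "T - t 3"]
      lattice_count_eq_card_vanishing[OF finite_H_edges, of "[1, 2, 4, 5]" t "T - t 3"]
      lattice_count_eq_card_vanishing[OF finite_H_edges, of "[1, 2]" t "T - t 3"]
    by (simp_all add: H_edges_def insert_Diff_if)
  show ?thesis
    unfolding counts Nborn_HB_eq_sum[OF indep] P_def[symmetric]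
    using \<open>finite P\<close> by (simp add: sum.distrib sum_subtractf)
qed

end
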